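(* Let $H$, $F$ be fixed graphs. (i) If $\chi(H)<\chi(F)$ and $n$ is sufficiently large, then $\mathrm{ex}(n,H,F)>\mathrm{ex}(n-1,H,F)$. (ii) If $\chi(\mathcal H^*(H))<\chi(\mathcal H(F))$ and $n$ is sufficiently large, then $\mathrm{ex}(n,\mathcal H(H),\mathcal H(F))>\mathrm{ex}(n-1,\mathcal H(H),\mathcal H(F))$.
   Context: All graphs are finite and simple; $\chi$ denotes chromatic number, and for a family $\mathcal X$ of graphs $\chi(\mathcal X)$ is the smallest chromatic number of a member of $\mathcal X$. $\alpha(X)$ is the independence number of $X$. $\mathcal H(X)$ is the family of graphs obtained from $X$ by deleting an independent set of vertices, and $\mathcal H^*(X)$ is the family of graphs obtained from $X$ by deleting an independent set of order $\alpha(X)$. $\mathrm{ex}(n,H,F)$ is the maximum number of copies of $H$ (subgraphs isomorphic to $H$) in an $n$-vertex graph not containing $F$ as a subgraph; for families $\mathcal H,\mathcal F$, $\mathrm{ex}(n,\mathcal H,\mathcal F)$ is the maximum, over $n$-vertex graphs containing no member of $\mathcal F$ as a subgraph, of the total number of copies of members of $\mathcal H$. *)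

theory Defs
  imports Main "HOL-Library.Extended_Nat"
begin

text \<open>A graph is a pair (vertex set, edge set); edges are 2-element vertex sets.\<close>
type_synonym 'a sgraph = "'a set \<times> 'a set set"

abbreviation verts :: "'a sgraph \<Rightarrow> 'a set" where "verts G \<equiv> fst G"
abbreviation edges :: "'a sgraph \<Rightarrow> 'a set set" where "edges G \<equiv> snd G"

definition sgraph_wf :: "'a sgraph \<Rightarrow> bool" where
  "sgraph_wf G \<longleftrightarrow> finite (verts G) \<and>
     (\<forall>e\<in>edges G. \<exists>u v. u \<noteq> v \<and> u \<in> verts G \<and> v \<in> verts G \<and> e = {u, v})"

definition graph :: "'a sgraph \<Rightarrow> bool" where
  "graph G \<longleftrightarrow> sgraph_wf G \<and> verts G \<noteq> {}"

definition chi :: "'a sgraph \<Rightarrow> nat" where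
  "chi G = (LEAST k. \<exists>c :: 'a \<Rightarrow> nat. (\<forall>v\<in>verts G. c v < k) \<and>
                 (\<forall>u v. {u, v} \<in> edges G \<longrightarrow> c u \<noteq> c v))"

definition indep :: "'a sgraph \<Rightarrow> 'a set \<Rightarrow> bool" where
  "indep G I \<longleftrightarrow> I \<subseteq> verts G \<and> (\<forall>e\<in>edges G. \<not> e \<subseteq> I)"

definition alpha :: "'a sgraph \<Rightarrow> nat" where
  "alpha G = Max {card I | I. indep G I}"

definition delete_set :: "'a sgraph \<Rightarrow> 'a set \<Rightarrow> 'a sgraph" where
  "delete_set G I = (verts G - I, {e \<in> edges G. e \<inter> I = {}})"

text \<open>\<open>\<H>(X)\<close>: graphs obtained from X by deleting an independent set (the result must be a graph,
  i.e. have a nonempty vertex set).\<close>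
definition Hfam :: "'a sgraph \<Rightarrow> 'a sgraph set" where
  "Hfam X = {delete_set X I | I. indep X I \<and> I \<noteq> verts X}"

definition Hstar :: "'a sgraph \<Rightarrow> 'a sgraph set" where
  "Hstar X = {delete_set X I | I. indep X I \<and> card I = alpha X \<and> I \<noteq> verts X}"

text \<open>Smallest chromatic number of a member of the family (infinity for the empty family).\<close>
definition chi_fam :: "'a sgraph set \<Rightarrow> enat" where
  "chi_fam A = (INF G\<in>A. enat (chi G))"

definition subgraph :: "'a sgraph \<Rightarrow> 'a sgraph \<Rightarrow> bool" where
  "subgraph S G \<longleftrightarrow> verts S \<subseteq> verts G \<and> edges S \<subseteq> edges G \<and> (\<forall>e\<in>edges S. e \<subseteq> verts S)"

definition iso :: "'a sgraph \<Rightarrow> 'b sgraph \<Rightarrow> bool" where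
  "iso G G' \<longleftrightarrow> (\<exists>f. bij_betw f (verts G) (verts G') \<and> (\<lambda>e. f ` e) ` edges G = edges G')"

definition copies :: "'a sgraph set \<Rightarrow> 'b sgraph \<Rightarrow> 'b sgraph set" where
  "copies A G = {S. subgraph S G \<and> (\<exists>X\<in>A. iso X S)}"

definition contains :: "'b sgraph \<Rightarrow> 'a sgraph set \<Rightarrow> bool" where
  "contains G A \<longleftrightarrow> copies A G \<noteq> {}"

definition ex :: "nat \<Rightarrow> 'a sgraph set \<Rightarrow> 'b sgraph set \<Rightarrow> nat" where
  "ex n A B = Max {card (copies A G) | G :: nat sgraph.
       verts G = {0..<n} \<and> sgraph_wf G \<and> \<not> contains G B}"

end

theory Submission
  imports Defs "HOL-Library.FuncSet"
begin

text \<open>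
  Let X be a member of the family being counted whose chromatic number is smaller than that of
  every forbidden graph, and let d = |X|: X = H in (i), and in (ii) some \<open>H - I0\<close> in \<open>\<H>(H)\<close>,
  which exists already under the weaker hypothesis \<open>\<chi>(\<H>(H)) < \<chi>(\<H>(F))\<close>. A blow-up of X
  with parts of size about n/d has no forbidden subgraph and about \<open>(n/d)^d\<close> copies of X, so
  ex(n - 1) grows like \<open>n^d\<close>.

  Call a graph G extendable if for some member Y of the family, some vertex a of Y and some
  embedding of Y - a into G, the images of the neighbours of a have at least |F| common
  neighbours. A new vertex joined to these images then creates a new copy of Y but no
  forbidden graph, since a forbidden copy through the new vertex could be rerouted through an
  unused common neighbour. If G is not extendable, every embedding of Y - a extends in fewer
  than |F| ways, and deleting an independent set vertex by vertex bounds the number of copies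
  by \<open>O(n^(d-1))\<close>. Hence for large n an extremal graph on n - 1 vertices is extendable, and
  ex(n) > ex(n - 1).
\<close>

section \<open>Embeddings and copies\<close>

lemma sgraph_wf_finite_verts: "sgraph_wf G \<Longrightarrow> finite (verts G)"
  unfolding sgraph_wf_def by blast

lemma sgraph_wf_edgeD:
  "sgraph_wf G \<Longrightarrow> e \<in> edges G \<Longrightarrow> \<exists>u v. u \<noteq> v \<and> u \<in> verts G \<and> v \<in> verts G \<and> e = {u, v}"
  unfolding sgraph_wf_def by blast

lemma sgraph_wf_edge_pairD:
  "sgraph_wf G \<Longrightarrow> {u, v} \<in> edges G \<Longrightarrow> u \<noteq> v \<and> u \<in> verts G \<and> v \<in> verts G"
  using sgraph_wf_edgeD[of G "{u, v}"] by (auto simp: doubleton_eq_iff)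

lemma sgraph_wf_edge_subset: "sgraph_wf G \<Longrightarrow> e \<in> edges G \<Longrightarrow> e \<subseteq> verts G"
  using sgraph_wf_edgeD by fastforce

lemma finite_copies:
  assumes "sgraph_wf G"
  shows "finite (copies A G)"
proof (rule finite_subset)
  show "copies A G \<subseteq> Pow (verts G) \<times> Pow (Pow (verts G))"
    using sgraph_wf_edge_subset[OF assms] unfolding copies_def subgraph_def by fastforce
  show "finite (Pow (verts G) \<times> Pow (Pow (verts G)))"
    using sgraph_wf_finite_verts[OF assms] by simp
qed

lemma copies_mono:
  "verts G \<subseteq> verts G' \<Longrightarrow> edges G \<subseteq> edges G' \<Longrightarrow> copies A G \<subseteq> copies A G'"
  unfolding copies_def subgraph_def by blast

lemma verts_delete_set [simp]: "verts (delete_set G I) = verts G - I"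
  and edges_delete_set [simp]: "edges (delete_set G I) = {e \<in> edges G. e \<inter> I = {}}"
  unfolding delete_set_def by simp_all

lemma delete_set_delete_set: "delete_set (delete_set G I) J = delete_set G (I \<union> J)"
  unfolding delete_set_def by auto

lemma sgraph_wf_delete_set: "sgraph_wf G \<Longrightarrow> sgraph_wf (delete_set G I)"
  unfolding sgraph_wf_def by fastforce

lemma indep_singleton: "sgraph_wf G \<Longrightarrow> v \<in> verts G \<Longrightarrow> indep G {v}"
  unfolding indep_def using sgraph_wf_edgeD by fastforce

definition graph_image :: "('a \<Rightarrow> 'b) \<Rightarrow> 'a sgraph \<Rightarrow> 'b sgraph" where
  "graph_image g X = (g ` verts X, (\<lambda>e. g ` e) ` edges X)"

lemma iso_refl: "iso X X"
  unfolding iso_def by (intro exI[of _ id]) auto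

lemma iso_graph_image:
  assumes "iso F S" "inj_on g (verts S)"
  shows "iso F (graph_image g S)"
proof -
  obtain h where h: "bij_betw h (verts F) (verts S)" "(\<lambda>e. h ` e) ` edges F = edges S"
    using assms(1) unfolding iso_def by blast
  have "bij_betw (g \<circ> h) (verts F) (g ` verts S)"
    using h(1) assms(2) by (meson bij_betw_trans inj_on_imp_bij_betw)
  moreover have "(\<lambda>e. (g \<circ> h) ` e) ` edges F = (\<lambda>e. g ` e) ` edges S"
    unfolding h(2)[symmetric] by (simp add: image_comp comp_def)
  ultimately show ?thesis
    unfolding iso_def graph_image_def by (intro exI[of _ "g \<circ> h"]) (simp add: comp_def)
qed

lemma subgraph_graph_image:
  assumes "\<forall>e\<in>edges X. e \<subseteq> verts X" "g ` verts X \<subseteq> verts G" "\<forall>e\<in>edges X. g ` e \<in> edges G"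
  shows "subgraph (graph_image g X) G"
  using assms unfolding subgraph_def graph_image_def by auto

definition embeddings :: "'a sgraph \<Rightarrow> 'b sgraph \<Rightarrow> ('a \<Rightarrow> 'b) set" where
  "embeddings X G = {g \<in> verts X \<rightarrow>\<^sub>E verts G. inj_on g (verts X) \<and> (\<forall>e\<in>edges X. g ` e \<in> edges G)}"

lemma graph_image_in_copies:
  assumes "sgraph_wf X" "g \<in> embeddings X G"
  shows "graph_image g X \<in> copies {X} G"
proof -
  have "subgraph (graph_image g X) G"
    using assms sgraph_wf_edge_subset[OF assms(1)]
    by (intro subgraph_graph_image) (auto simp: embeddings_def)
  moreover have "iso X (graph_image g X)"
    using assms(2) by (intro iso_graph_image[OF iso_refl]) (simp add: embeddings_def)
  ultimately show ?thesis
    unfolding copies_def by blast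
qed

lemma copies_subset_graph_images:
  assumes "sgraph_wf X"
  shows "copies {X} G \<subseteq> (\<lambda>g. graph_image g X) ` embeddings X G"
proof
  fix S assume "S \<in> copies {X} G"
  then have sub: "subgraph S G" and "iso X S" unfolding copies_def by auto
  then obtain h where h: "bij_betw h (verts X) (verts S)" "(\<lambda>e. h ` e) ` edges X = edges S"
    unfolding iso_def by blast
  define g where "g = restrict h (verts X)"
  have g_edge: "g ` e = h ` e" if "e \<in> edges X" for e
    using sgraph_wf_edge_subset[OF assms that] unfolding g_def by auto
  have "g \<in> embeddings X G"
    using h sub g_edge unfolding embeddings_def g_def bij_betw_def subgraph_def by auto
  moreover have "S = graph_image g X"
    using h g_edge image_cong[OF refl g_edge] unfolding graph_image_def g_def bij_betw_def
    by (simp add: prod_eq_iff)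
  ultimately show "S \<in> (\<lambda>g. graph_image g X) ` embeddings X G" by blast
qed

lemma finite_embeddings:
  "finite (verts X) \<Longrightarrow> finite (verts G) \<Longrightarrow> finite (embeddings X G)"
  unfolding embeddings_def by (rule finite_subset[of _ "verts X \<rightarrow>\<^sub>E verts G"]) (auto intro: finite_PiE)

lemma card_embeddings_le_power:
  assumes "finite (verts X)" "finite (verts G)"
  shows "card (embeddings X G) \<le> card (verts G) ^ card (verts X)"
proof -
  have "card (embeddings X G) \<le> card (verts X \<rightarrow>\<^sub>E verts G)"
    using assms unfolding embeddings_def by (intro card_mono) (auto intro: finite_PiE)
  also have "\<dots> = card (verts G) ^ card (verts X)"
    using assms by (simp add: card_funcsetE)
  finally show ?thesis .
qed

lemma card_copies_le_card_embeddings: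
  assumes "sgraph_wf X" "sgraph_wf G"
  shows "card (copies {X} G) \<le> card (embeddings X G)"
proof -
  have fin: "finite (embeddings X G)"
    using assms by (simp add: finite_embeddings sgraph_wf_finite_verts)
  have "card (copies {X} G) \<le> card ((\<lambda>g. graph_image g X) ` embeddings X G)"
    using copies_subset_graph_images[OF assms(1), of G] fin by (intro card_mono) auto
  also have "\<dots> \<le> card (embeddings X G)"
    using fin by (rule card_image_le)
  finally show ?thesis .
qed

lemma card_copies_le_sum_embeddings:
  assumes "finite XX" "\<forall>X\<in>XX. sgraph_wf X" "sgraph_wf G"
  shows "card (copies XX G) \<le> (\<Sum>X\<in>XX. card (embeddings X G))"
proof -
  have "copies XX G = (\<Union>X\<in>XX. copies {X} G)"
    unfolding copies_def by auto
  then have "card (copies XX G) \<le> (\<Sum>X\<in>XX. card (copies {X} G))"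
    using card_UN_le[OF assms(1)] by simp
  also have "\<dots> \<le> (\<Sum>X\<in>XX. card (embeddings X G))"
    using assms(2,3) by (intro sum_mono card_copies_le_card_embeddings) auto
  finally show ?thesis .
qed

lemma restrict_embedding:
  assumes "g \<in> embeddings X G"
  shows "restrict g (verts X - T) \<in> embeddings (delete_set X T) G"
proof -
  have "restrict g (verts X - T) ` e = g ` e" if "e \<in> edges X" "e \<inter> T = {}" for e
  proof (rule image_cong[OF refl])
    fix x assume "x \<in> e"
    show "restrict g (verts X - T) x = g x"
      using assms that \<open>x \<in> e\<close> unfolding embeddings_def by (cases "x \<in> verts X") auto
  qed
  then show ?thesis
    using assms unfolding embeddings_def inj_on_def by auto
qed

definition neighbours :: "'a sgraph \<Rightarrow> 'a \<Rightarrow> 'a set" where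
  "neighbours X a = {x. {a, x} \<in> edges X}"

definition common_neighbours :: "'b sgraph \<Rightarrow> 'b set \<Rightarrow> 'b set" where
  "common_neighbours G S = {w \<in> verts G. \<forall>s\<in>S. {w, s} \<in> edges G}"

lemma neighbours_subset: "sgraph_wf X \<Longrightarrow> neighbours X a \<subseteq> verts X - {a}"
  unfolding neighbours_def by (auto dest: sgraph_wf_edge_pairD)

lemma neighbours_disjoint_indep: "indep X T \<Longrightarrow> t \<in> T \<Longrightarrow> neighbours X t \<inter> T = {}"
  unfolding indep_def neighbours_def by fastforce

lemma embedding_in_common_neighbours:
  assumes wX: "sgraph_wf X" and T: "indep X T" and t: "t \<in> T"
    and g: "g \<in> embeddings X G" and agree: "\<forall>x\<in>verts X - T. g x = g0 x"
  shows "g t \<in> common_neighbours G (g0 ` neighbours X t)"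
  unfolding common_neighbours_def
proof (intro CollectI conjI ballI)
  show "g t \<in> verts G"
    using g t T unfolding embeddings_def indep_def by auto
  fix s assume "s \<in> g0 ` neighbours X t"
  then obtain x where x: "x \<in> neighbours X t" "s = g0 x"
    by blast
  have "x \<in> verts X - T"
    using x neighbours_subset[OF wX, of t] neighbours_disjoint_indep[OF T t] by blast
  then have "g x = g0 x"
    using agree by blast
  moreover have "g ` {t, x} \<in> edges G"
    using g x(1) unfolding embeddings_def neighbours_def by blast
  ultimately show "{g t, s} \<in> edges G"
    using x(2) by simp
qed

lemma inj_on_restrict_embedding_fibre:
  "inj_on (\<lambda>g. restrict g T) {g \<in> embeddings X G. restrict g (verts X - T) = \<psi>}"
proof (rule inj_onI)
  fix g1 g2
  assume g12: "g1 \<in> {g \<in> embeddings X G. restrict g (verts X - T) = \<psi>}"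
    "g2 \<in> {g \<in> embeddings X G. restrict g (verts X - T) = \<psi>}" "restrict g1 T = restrict g2 T"
  show "g1 = g2"
  proof (rule PiE_ext)
    show "g1 \<in> verts X \<rightarrow>\<^sub>E verts G" "g2 \<in> verts X \<rightarrow>\<^sub>E verts G"
      using g12 unfolding embeddings_def by auto
    fix x assume "x \<in> verts X"
    then show "g1 x = g2 x"
      using g12 by (cases "x \<in> T") (auto dest!: fun_cong[of _ _ x])
  qed
qed

text \<open>An embedding in a fibre is determined by its values on T, and by
  \<open>embedding_in_common_neighbours\<close> there are fewer than f choices for each of them.\<close>
lemma card_embedding_fibre_le:
  assumes wX: "sgraph_wf X" and wG: "sgraph_wf G" and T: "indep X T"
    and sparse: "\<forall>t\<in>T. \<forall>\<psi>\<in>embeddings (delete_set X {t}) G.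
                   card (common_neighbours G (\<psi> ` neighbours X t)) < f"
  shows "card {g \<in> embeddings X G. restrict g (verts X - T) = \<psi>} \<le> f ^ card T"
    (is "card ?fibre \<le> _")
proof (cases "?fibre = {}")
  case True
  then show ?thesis
    by (metis card.empty le0)
next
  case False
  then obtain g0 where g0: "g0 \<in> embeddings X G" "restrict g0 (verts X - T) = \<psi>"
    by blast
  have finT: "finite T"
    using T sgraph_wf_finite_verts[OF wX] finite_subset unfolding indep_def by blast
  define C where "C t = common_neighbours G (g0 ` neighbours X t)" for t
  have card_C: "card (C t) < f" if "t \<in> T" for t
  proof -
    have "restrict g0 (verts X - {t}) ` neighbours X t = g0 ` neighbours X t"
      using neighbours_subset[OF wX, of t] by (intro image_cong) auto
    then show ?thesis
      using sparse restrict_embedding[OF g0(1), of "{t}"] that unfolding C_def by metis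
  qed
  have into: "(\<lambda>g. restrict g T) ` ?fibre \<subseteq> (\<Pi>\<^sub>E t\<in>T. C t)"
  proof (rule image_subsetI)
    fix g assume g: "g \<in> ?fibre"
    have "restrict g (verts X - T) = restrict g0 (verts X - T)"
      using g g0(2) by simp
    then have agree: "\<forall>x\<in>verts X - T. g x = g0 x"
      by (metis restrict_apply')
    have "g t \<in> C t" if "t \<in> T" for t
      using embedding_in_common_neighbours[OF wX T that _ agree] g unfolding C_def by blast
    then show "restrict g T \<in> (\<Pi>\<^sub>E t\<in>T. C t)"
      by auto
  qed
  have "card ?fibre = card ((\<lambda>g. restrict g T) ` ?fibre)"
    by (rule card_image[OF inj_on_restrict_embedding_fibre, symmetric])
  also have "\<dots> \<le> card (\<Pi>\<^sub>E t\<in>T. C t)"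
    using into finT sgraph_wf_finite_verts[OF wG]
    by (intro card_mono finite_PiE) (auto simp: C_def common_neighbours_def)
  also have "\<dots> = (\<Prod>t\<in>T. card (C t))"
    using finT by (rule card_PiE)
  also have "\<dots> \<le> (\<Prod>t\<in>T. f)"
    using card_C by (intro prod_mono) (auto simp: less_imp_le)
  finally show ?thesis
    by simp
qed

lemma card_embeddings_le_delete_indep:
  assumes wX: "sgraph_wf X" and wG: "sgraph_wf G" and T: "indep X T"
    and sparse: "\<forall>t\<in>T. \<forall>\<psi>\<in>embeddings (delete_set X {t}) G.
                   card (common_neighbours G (\<psi> ` neighbours X t)) < f"
  shows "card (embeddings X G) \<le> f ^ card T * card (embeddings (delete_set X T) G)"
proof -
  let ?E = "embeddings (delete_set X T) G"
  have fin: "finite ?E"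
    using wX wG by (simp add: finite_embeddings sgraph_wf_finite_verts)
  define fibre where "fibre \<psi> = {g \<in> embeddings X G. restrict g (verts X - T) = \<psi>}" for \<psi>
  have "embeddings X G = (\<Union>\<psi>\<in>?E. fibre \<psi>)"
    unfolding fibre_def using restrict_embedding by blast
  then have "card (embeddings X G) \<le> (\<Sum>\<psi>\<in>?E. card (fibre \<psi>))"
    using card_UN_le[OF fin] by simp
  also have "\<dots> \<le> (\<Sum>\<psi>\<in>?E. f ^ card T)"
    unfolding fibre_def by (intro sum_mono card_embedding_fibre_le[OF wX wG T sparse])
  finally show ?thesis
    by (simp add: mult.commute)
qed

lemma card_embeddings_le_delete_vertex:
  assumes wY: "sgraph_wf Y" and wG: "sgraph_wf G" and b: "b \<in> verts Y"
    and sparse: "\<forall>\<psi>\<in>embeddings (delete_set Y {b}) G.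
                   card (common_neighbours G (\<psi> ` neighbours Y b)) < f"
  shows "card (embeddings Y G) \<le> f * card (verts G) ^ (card (verts Y) - 1)"
proof -
  have finY: "finite (verts Y)" and finG: "finite (verts G)"
    using wY wG by (simp_all add: sgraph_wf_finite_verts)
  have "card (embeddings Y G) \<le> f ^ card {b} * card (embeddings (delete_set Y {b}) G)"
    using sparse by (intro card_embeddings_le_delete_indep[OF wY wG indep_singleton[OF wY b]]) simp
  also have "\<dots> \<le> f * card (verts G) ^ card (verts Y - {b})"
    using card_embeddings_le_power[of "delete_set Y {b}" G] finY finG by simp
  finally show ?thesis
    using b finY by simp
qed

section \<open>Adding a vertex\<close>

definition add_vertex :: "'b sgraph \<Rightarrow> 'b \<Rightarrow> 'b set \<Rightarrow> 'b sgraph" where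
  "add_vertex G v S = (insert v (verts G), edges G \<union> (\<lambda>s. {v, s}) ` S)"

lemma sgraph_wf_add_vertex:
  assumes wG: "sgraph_wf G" and v: "v \<notin> verts G" and S: "S \<subseteq> verts G"
  shows "sgraph_wf (add_vertex G v S)"
  unfolding sgraph_wf_def add_vertex_def fst_conv snd_conv
proof (intro conjI ballI)
  show "finite (insert v (verts G))"
    using sgraph_wf_finite_verts[OF wG] by simp
  fix e assume "e \<in> edges G \<union> (\<lambda>s. {v, s}) ` S"
  then show "\<exists>x y. x \<noteq> y \<and> x \<in> insert v (verts G) \<and> y \<in> insert v (verts G) \<and> e = {x, y}"
  proof
    assume "e \<in> edges G"
    then show ?thesis
      using sgraph_wf_edgeD[OF wG] by blast
  next
    assume "e \<in> (\<lambda>s. {v, s}) ` S"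
    then obtain s where "e = {v, s}" "s \<in> verts G" "s \<noteq> v"
      using S v by blast
    then show ?thesis
      by blast
  qed
qed

lemma subgraph_add_vertexD:
  assumes sub: "subgraph S' (add_vertex G v S)" and v: "v \<notin> verts S'"
  shows "subgraph S' G"
  unfolding subgraph_def
proof (intro conjI)
  show "verts S' \<subseteq> verts G"
    using sub v unfolding subgraph_def add_vertex_def by auto
  show "edges S' \<subseteq> edges G"
  proof
    fix e assume e: "e \<in> edges S'"
    then have "v \<notin> e"
      using sub v unfolding subgraph_def by blast
    then show "e \<in> edges G"
      using e sub unfolding subgraph_def add_vertex_def by auto
  qed
  show "\<forall>e\<in>edges S'. e \<subseteq> verts S'"
    using sub unfolding subgraph_def by blast
qed

lemma subgraph_add_vertex_substitute:
  assumes wG: "sgraph_wf G" and v: "v \<notin> verts G" and S: "S \<subseteq> verts G"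
    and sub: "subgraph S' (add_vertex G v S)"
    and w: "w \<in> common_neighbours G S"
  shows "subgraph (graph_image (id(v := w)) S') G"
proof (rule subgraph_graph_image)
  show "\<forall>e\<in>edges S'. e \<subseteq> verts S'"
    using sub unfolding subgraph_def by blast
  show "id(v := w) ` verts S' \<subseteq> verts G"
    using sub w unfolding subgraph_def add_vertex_def common_neighbours_def by auto
  show "\<forall>e\<in>edges S'. id(v := w) ` e \<in> edges G"
  proof
    fix e assume "e \<in> edges S'"
    then have "e \<in> edges G \<or> (\<exists>s\<in>S. e = {v, s})"
      using sub unfolding subgraph_def add_vertex_def by auto
    then show "id(v := w) ` e \<in> edges G"
    proof
      assume e: "e \<in> edges G"
      then have "v \<notin> e"
        using sgraph_wf_edge_subset[OF wG] v by blast
      then have "id(v := w) ` e = id ` e"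
        by (intro image_cong) auto
      then show ?thesis
        using e by simp
    next
      assume "\<exists>s\<in>S. e = {v, s}"
      then obtain s where "s \<in> S" "e = {v, s}" "s \<noteq> v"
        using S v by blast
      then show ?thesis
        using w unfolding common_neighbours_def by (auto simp: insert_commute)
    qed
  qed
qed

text \<open>A copy of F' through the new vertex v can be rerouted through a common neighbour
  of S that it does not use; there is one as soon as S has at least card (verts F') of them.\<close>
lemma not_contains_add_vertex:
  assumes wG: "sgraph_wf G" and v: "v \<notin> verts G" and S: "S \<subseteq> verts G"
    and free: "\<not> contains G FF"
    and small: "\<forall>F'\<in>FF. card (verts F') \<le> card (common_neighbours G S)"
  shows "\<not> contains (add_vertex G v S) FF"
proof
  assume "contains (add_vertex G v S) FF"
  then obtain S' F' where sub: "subgraph S' (add_vertex G v S)" and F': "F' \<in> FF"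
    and iso: "iso F' S'"
    unfolding contains_def copies_def by blast
  have v_in: "v \<in> verts S'"
    using free F' iso subgraph_add_vertexD[OF sub] unfolding contains_def copies_def by blast
  have fin: "finite (verts S')"
    using sub sgraph_wf_finite_verts[OF wG] unfolding subgraph_def add_vertex_def
    by (auto intro: finite_subset)
  have "card (verts S') = card (verts F')"
    using iso unfolding iso_def by (metis bij_betw_same_card)
  moreover have "0 < card (verts S')"
    using fin v_in by (auto simp: card_gt_0_iff)
  ultimately have "card (verts S' - {v}) < card (common_neighbours G S)"
    using small F' v_in fin by fastforce
  then obtain w where w: "w \<in> common_neighbours G S" "w \<notin> verts S' - {v}"
    by (meson card_mono fin finite_Diff not_le subsetI)
  then have "w \<notin> verts S'"
    using v unfolding common_neighbours_def by auto
  then have "iso F' (graph_image (id(v := w)) S')"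
    by (intro iso_graph_image[OF iso]) (auto simp: inj_on_def)
  moreover have "subgraph (graph_image (id(v := w)) S') G"
    by (rule subgraph_add_vertex_substitute[OF wG v S sub w(1)])
  ultimately show False
    using free F' unfolding contains_def copies_def by blast
qed

lemma embedding_add_vertex:
  assumes a: "a \<in> verts X" and \<psi>: "\<psi> \<in> embeddings (delete_set X {a}) G"
    and wX: "sgraph_wf X" and v: "v \<notin> verts G"
  shows "\<psi>(a := v) \<in> embeddings X (add_vertex G v (\<psi> ` neighbours X a))"
proof -
  have \<psi>_into: "\<psi> x \<in> verts G" if "x \<in> verts X" "x \<noteq> a" for x
    using \<psi> that unfolding embeddings_def by auto
  have "\<psi>(a := v) \<in> verts X \<rightarrow>\<^sub>E insert v (verts G)"
    using \<psi> a unfolding embeddings_def by (auto simp: PiE_iff extensional_def)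
  moreover have "inj_on (\<psi>(a := v)) (verts X)"
    using \<psi> \<psi>_into v unfolding embeddings_def inj_on_def by (auto split: if_splits)
  moreover have "\<psi>(a := v) ` e \<in> edges G \<union> (\<lambda>s. {v, s}) ` \<psi> ` neighbours X a"
    if e: "e \<in> edges X" for e
  proof (cases "a \<in> e")
    case False
    then have "\<psi>(a := v) ` e = \<psi> ` e"
      by (intro image_cong) auto
    then show ?thesis
      using \<psi> e False unfolding embeddings_def by auto
  next
    case True
    then obtain x where "e = {a, x}"
      using sgraph_wf_edgeD[OF wX e] by blast
    moreover have "x \<noteq> a"
      using e calculation sgraph_wf_edge_pairD[OF wX] by blast
    ultimately show ?thesis
      using e unfolding neighbours_def by auto
  qed
  ultimately show ?thesis
    unfolding embeddings_def add_vertex_def by auto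
qed

definition extendable :: "'a sgraph set \<Rightarrow> nat \<Rightarrow> 'b sgraph \<Rightarrow> bool" where
  "extendable XX f G \<longleftrightarrow> (\<exists>X\<in>XX. \<exists>a\<in>verts X. \<exists>\<psi>\<in>embeddings (delete_set X {a}) G.
       f \<le> card (common_neighbours G (\<psi> ` neighbours X a)))"

lemma extendable_imp_larger_extension:
  fixes G :: "nat sgraph" and XX :: "'a sgraph set" and FF :: "'b sgraph set"
  assumes VG: "verts G = {0..<m}" and wG: "sgraph_wf G" and free: "\<not> contains G FF"
    and small: "\<forall>F'\<in>FF. card (verts F') \<le> f" and wXX: "\<forall>X\<in>XX. sgraph_wf X"
    and ext: "extendable XX f G"
  shows "\<exists>G'. verts G' = {0..<Suc m} \<and> sgraph_wf G' \<and> \<not> contains G' FF \<and>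
           card (copies XX G) < card (copies XX G')"
proof -
  obtain X a \<psi> where X: "X \<in> XX" and a: "a \<in> verts X"
    and \<psi>: "\<psi> \<in> embeddings (delete_set X {a}) G"
    and many: "f \<le> card (common_neighbours G (\<psi> ` neighbours X a))"
    using ext unfolding extendable_def by blast
  define S where "S = \<psi> ` neighbours X a"
  define G' where "G' = add_vertex G m S"
  have wX: "sgraph_wf X"
    using X wXX by blast
  have m: "m \<notin> verts G"
    using VG by simp
  have S: "S \<subseteq> verts G"
    using \<psi> neighbours_subset[OF wX, of a] unfolding S_def embeddings_def by auto
  have VG': "verts G' = {0..<Suc m}"
    using VG unfolding G'_def add_vertex_def by auto
  have wG': "sgraph_wf G'"
    unfolding G'_def by (rule sgraph_wf_add_vertex[OF wG m S])
  have free': "\<not> contains G' FF"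
    unfolding G'_def using small many
    by (intro not_contains_add_vertex[OF wG m S free]) (auto simp: S_def)
  have "graph_image (\<psi>(a := m)) X \<in> copies XX G'"
    using graph_image_in_copies[OF wX embedding_add_vertex[OF a \<psi> wX m]] X
    unfolding G'_def S_def copies_def by blast
  moreover have "graph_image (\<psi>(a := m)) X \<notin> copies XX G"
    using a m unfolding copies_def subgraph_def graph_image_def by force
  moreover have "copies XX G \<subseteq> copies XX G'"
    unfolding G'_def add_vertex_def by (rule copies_mono) auto
  ultimately have "copies XX G \<subset> copies XX G'"
    by blast
  then have "card (copies XX G) < card (copies XX G')"
    by (rule psubset_card_mono[OF finite_copies[OF wG']])
  with VG' wG' free' show ?thesis
    by (intro exI[of _ G']) simp
qed

section \<open>Blow-ups\<close>

lemma chi_le_colouring: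
  assumes "\<forall>v\<in>verts G. c v < k" "\<forall>u v. {u, v} \<in> edges G \<longrightarrow> c u \<noteq> c v"
  shows "chi G \<le> k"
  unfolding chi_def by (rule Least_le) (use assms in blast)

lemma chi_colouring:
  assumes wX: "sgraph_wf X"
  obtains c :: "'a \<Rightarrow> nat"
  where "\<forall>v\<in>verts X. c v < chi X" "\<forall>u v. {u, v} \<in> edges X \<longrightarrow> c u \<noteq> c v"
proof -
  obtain ix where ix: "bij_betw ix (verts X) {0..<card (verts X)}"
    using ex_bij_betw_finite_nat sgraph_wf_finite_verts[OF wX] by blast
  \<comment> \<open>Colouring every vertex differently shows that the LEAST in chi ranges over a nonempty set.\<close>
  have "(\<forall>v\<in>verts X. ix v < card (verts X)) \<and> (\<forall>u v. {u, v} \<in> edges X \<longrightarrow> ix u \<noteq> ix v)"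
    using ix sgraph_wf_edge_pairD[OF wX] unfolding bij_betw_def inj_on_def by auto
  then have "\<exists>k. \<exists>c :: 'a \<Rightarrow> nat. (\<forall>v\<in>verts X. c v < k) \<and> (\<forall>u v. {u, v} \<in> edges X \<longrightarrow> c u \<noteq> c v)"
    by blast
  from LeastI_ex[OF this] show ?thesis
    using that unfolding chi_def by blast
qed

lemma chi_le_if_copy_in_colourable:
  assumes sub: "subgraph S G" and iso: "iso F S"
    and c: "\<forall>v\<in>verts G. c v < k" "\<forall>u v. {u, v} \<in> edges G \<longrightarrow> c u \<noteq> c v"
  shows "chi F \<le> k"
proof -
  obtain g where g: "bij_betw g (verts F) (verts S)" "(\<lambda>e. g ` e) ` edges F = edges S"
    using iso unfolding iso_def by blast
  show ?thesis
  proof (rule chi_le_colouring[of F "c \<circ> g"])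
    show "\<forall>v\<in>verts F. (c \<circ> g) v < k"
      using bij_betwE[OF g(1)] sub c(1) unfolding subgraph_def by auto
    show "\<forall>u v. {u, v} \<in> edges F \<longrightarrow> (c \<circ> g) u \<noteq> (c \<circ> g) v"
    proof (intro allI impI)
      fix u v assume "{u, v} \<in> edges F"
      then have "g ` {u, v} \<in> edges S"
        using g(2) by blast
      then have "{g u, g v} \<in> edges G"
        using sub unfolding subgraph_def by auto
      then show "(c \<circ> g) u \<noteq> (c \<circ> g) v"
        using c(2) by simp
    qed
  qed
qed

text \<open>The vertices of V - D are isolated padding, so that a blow-up can have vertex set
  exactly \<open>{0..<m}\<close>.\<close>
definition blow_up :: "'a sgraph \<Rightarrow> ('b \<Rightarrow> 'a) \<Rightarrow> 'b set \<Rightarrow> 'b set \<Rightarrow> 'b sgraph" where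
  "blow_up X \<pi> D V = (V, {{p, q} | p q. p \<in> D \<and> q \<in> D \<and> {\<pi> p, \<pi> q} \<in> edges X})"

lemma sgraph_wf_blow_up:
  assumes wX: "sgraph_wf X" and V: "finite V" and D: "D \<subseteq> V"
  shows "sgraph_wf (blow_up X \<pi> D V)"
  unfolding sgraph_wf_def blow_up_def fst_conv snd_conv
proof (intro conjI ballI)
  show "finite V"
    by (rule V)
  fix e assume "e \<in> {{p, q} | p q. p \<in> D \<and> q \<in> D \<and> {\<pi> p, \<pi> q} \<in> edges X}"
  then obtain p q where pq: "e = {p, q}" "p \<in> D" "q \<in> D" "{\<pi> p, \<pi> q} \<in> edges X"
    by blast
  then have "p \<noteq> q"
    using sgraph_wf_edge_pairD[OF wX] by blast
  with pq D show "\<exists>u v. u \<noteq> v \<and> u \<in> V \<and> v \<in> V \<and> e = {u, v}"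
    by blast
qed

lemma not_contains_blow_up:
  assumes wX: "sgraph_wf X" and ne: "verts X \<noteq> {}" and \<pi>: "\<pi> ` D \<subseteq> verts X"
    and chi: "\<forall>F'\<in>FF. chi X < chi F'"
  shows "\<not> contains (blow_up X \<pi> D V) FF"
proof
  assume "contains (blow_up X \<pi> D V) FF"
  then obtain S F' where sub: "subgraph S (blow_up X \<pi> D V)" and F': "F' \<in> FF" and iso: "iso F' S"
    unfolding contains_def copies_def by blast
  obtain c where c: "\<forall>v\<in>verts X. c v < chi X" "\<forall>u v. {u, v} \<in> edges X \<longrightarrow> c u \<noteq> c v"
    using chi_colouring[OF wX] by blast
  obtain x0 where x0: "x0 \<in> verts X"
    using ne by blast
  define col where "col p = c (if p \<in> D then \<pi> p else x0)" for p
  have "chi F' \<le> chi X"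
  proof (rule chi_le_if_copy_in_colourable[OF sub iso, of col])
    show "\<forall>v\<in>verts (blow_up X \<pi> D V). col v < chi X"
      using c(1) \<pi> x0 unfolding col_def by auto
    show "\<forall>u v. {u, v} \<in> edges (blow_up X \<pi> D V) \<longrightarrow> col u \<noteq> col v"
    proof (intro allI impI)
      fix u v assume "{u, v} \<in> edges (blow_up X \<pi> D V)"
      then obtain p q where pq: "{u, v} = {p, q}" "p \<in> D" "q \<in> D" "{\<pi> p, \<pi> q} \<in> edges X"
        unfolding blow_up_def by auto
      moreover have "{\<pi> q, \<pi> p} \<in> edges X"
        using pq(4) by (simp add: insert_commute)
      ultimately show "col u \<noteq> col v"
        using c(2) unfolding col_def doubleton_eq_iff by auto
    qed
  qed
  then show False
    using chi F' by fastforce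
qed

lemma section_embedding_blow_up:
  assumes wX: "sgraph_wf X" and D: "D \<subseteq> V"
    and g: "g \<in> verts X \<rightarrow>\<^sub>E D" and sect: "\<forall>x\<in>verts X. \<pi> (g x) = x"
  shows "g \<in> embeddings X (blow_up X \<pi> D V)"
  unfolding embeddings_def
proof (intro CollectI conjI ballI)
  show "g \<in> verts X \<rightarrow>\<^sub>E verts (blow_up X \<pi> D V)"
    using g D unfolding blow_up_def by auto
  show "inj_on g (verts X)"
    using sect by (metis inj_onI)
  fix e assume e: "e \<in> edges X"
  then obtain u v where uv: "e = {u, v}" "u \<in> verts X" "v \<in> verts X"
    using sgraph_wf_edgeD[OF wX] by blast
  then have "{\<pi> (g u), \<pi> (g v)} \<in> edges X" "g u \<in> D" "g v \<in> D"
    using e g sect by auto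
  then show "g ` e \<in> edges (blow_up X \<pi> D V)"
    unfolding uv(1) blow_up_def by auto
qed

lemma card_copies_blow_up_ge:
  assumes wX: "sgraph_wf X" and V: "finite V" and D: "D \<subseteq> V"
    and fibres: "\<forall>x\<in>verts X. k \<le> card {p \<in> D. \<pi> p = x}"
  shows "k ^ card (verts X) \<le> card (copies {X} (blow_up X \<pi> D V))"
proof -
  have "\<forall>x\<in>verts X. \<exists>B. B \<subseteq> {p \<in> D. \<pi> p = x} \<and> card B = k"
    using fibres obtain_subset_with_card_n by blast
  from bchoice[OF this] obtain B where B: "\<forall>x\<in>verts X. B x \<subseteq> {p \<in> D. \<pi> p = x} \<and> card (B x) = k"
    by blast
  define P where "P = (\<Pi>\<^sub>E x\<in>verts X. B x)"
  have P: "g \<in> verts X \<rightarrow>\<^sub>E D" "\<forall>x\<in>verts X. \<pi> (g x) = x" if "g \<in> P" for g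
    using that B unfolding P_def by blast+
  have inj: "inj_on (\<lambda>g. graph_image g X) P"
  proof (rule inj_onI)
    fix g1 g2 assume g: "g1 \<in> P" "g2 \<in> P" "graph_image g1 X = graph_image g2 X"
    then have im: "g1 ` verts X = g2 ` verts X"
      unfolding graph_image_def by simp
    show "g1 = g2"
    proof (rule PiE_ext)
      show "g1 \<in> verts X \<rightarrow>\<^sub>E D" "g2 \<in> verts X \<rightarrow>\<^sub>E D"
        using P g by blast+
      fix x assume x: "x \<in> verts X"
      then obtain y where "y \<in> verts X" "g1 x = g2 y"
        using im by blast
      moreover from this have "x = y"
        using P(2)[OF g(1)] P(2)[OF g(2)] x by metis
      ultimately show "g1 x = g2 x"
        by simp
    qed
  qed
  have "k ^ card (verts X) = card P"
    using B sgraph_wf_finite_verts[OF wX] unfolding P_def by (simp add: card_PiE)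
  also have "\<dots> = card ((\<lambda>g. graph_image g X) ` P)"
    using inj by (simp add: card_image)
  also have "\<dots> \<le> card (copies {X} (blow_up X \<pi> D V))"
  proof (intro card_mono[OF finite_copies[OF sgraph_wf_blow_up[OF wX V D]]] image_subsetI)
    fix g assume "g \<in> P"
    then show "graph_image g X \<in> copies {X} (blow_up X \<pi> D V)"
      using P by (intro graph_image_in_copies[OF wX] section_embedding_blow_up[OF wX D]) auto
  qed
  finally show ?thesis .
qed

lemma exists_free_graph_with_many_copies:
  fixes X :: "'a sgraph" and FF :: "'b sgraph set"
  assumes wX: "sgraph_wf X" and ne: "verts X \<noteq> {}" and chi: "\<forall>F'\<in>FF. chi X < chi F'"
    and m: "card (verts X) * k \<le> m"
  shows "\<exists>G :: nat sgraph. verts G = {0..<m} \<and> sgraph_wf G \<and> \<not> contains G FF \<and>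
           k ^ card (verts X) \<le> card (copies {X} G)"
proof -
  define D where "D = {0..<card (verts X) * k}"
  have "finite (verts X \<times> {0..<k})"
    using sgraph_wf_finite_verts[OF wX] by simp
  then obtain \<beta> where \<beta>: "bij_betw \<beta> D (verts X \<times> {0..<k})"
    using ex_bij_betw_nat_finite unfolding D_def by (fastforce simp: card_cartesian_product)
  define G where "G = blow_up X (fst \<circ> \<beta>) D {0..<m}"
  have D: "D \<subseteq> {0..<m}"
    using m unfolding D_def by auto
  have \<pi>: "(fst \<circ> \<beta>) ` D \<subseteq> verts X"
    using bij_betwE[OF \<beta>] by auto
  have "k \<le> card {p \<in> D. (fst \<circ> \<beta>) p = x}" if x: "x \<in> verts X" for x
  proof -
    have "\<beta> ` {p \<in> D. fst (\<beta> p) = x} = {y \<in> \<beta> ` D. fst y = x}"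
      by blast
    also have "\<dots> = {x} \<times> {0..<k}"
      using \<beta> x unfolding bij_betw_def by auto
    finally have "card (\<beta> ` {p \<in> D. fst (\<beta> p) = x}) = k"
      by simp
    moreover have "inj_on \<beta> {p \<in> D. fst (\<beta> p) = x}"
      using bij_betw_imp_inj_on[OF \<beta>] by (rule inj_on_subset) blast
    ultimately show ?thesis
      by (simp add: card_image)
  qed
  then have "k ^ card (verts X) \<le> card (copies {X} G)"
    unfolding G_def by (intro card_copies_blow_up_ge[OF wX _ D]) auto
  moreover have "sgraph_wf G"
    unfolding G_def by (rule sgraph_wf_blow_up[OF wX _ D]) simp
  moreover have "\<not> contains G FF"
    unfolding G_def by (rule not_contains_blow_up[OF wX ne \<pi> chi])
  ultimately show ?thesis
    unfolding G_def blow_up_def by auto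
qed

section \<open>Extremal numbers\<close>

lemma power_div_eventually_gt:
  fixes C d :: nat
  assumes d: "1 \<le> d"
  shows "\<exists>M. \<forall>m\<ge>M. C * m ^ (d - 1) < (m div d) ^ d"
proof -
  define D where "D = C * (2 * d) ^ (d - 1) + 1"
  have "C * m ^ (d - 1) < (m div d) ^ d" if m: "d * D \<le> m" for m
  proof -
    define q where "q = m div d"
    have qD: "D \<le> q"
      using div_le_mono[OF m, of d] d unfolding q_def by simp
    then have q: "1 \<le> q"
      unfolding D_def by simp
    have "m = q * d + m mod d" "m mod d < d"
      using d unfolding q_def by simp_all
    then have "m < d * (q + 1)"
      by (simp add: algebra_simps)
    also have "\<dots> \<le> 2 * d * q"
      using q by simp
    finally have "C * m ^ (d - 1) \<le> C * (2 * d * q) ^ (d - 1)"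
      by (intro mult_le_mono2 power_mono) auto
    also have "\<dots> = C * (2 * d) ^ (d - 1) * q ^ (d - 1)"
      by (simp add: power_mult_distrib)
    also have "\<dots> < D * q ^ (d - 1)"
      using q unfolding D_def by simp
    also have "\<dots> \<le> q * q ^ (d - 1)"
      using qD by simp
    also have "\<dots> = q ^ d"
      using d by (simp add: power_eq_if)
    finally show ?thesis
      unfolding q_def .
  qed
  then show ?thesis
    by blast
qed

lemma ex_eq_Max:
  "ex n A B = Max ((\<lambda>G. card (copies A G)) ` {G :: nat sgraph. verts G = {0..<n} \<and> sgraph_wf G \<and> \<not> contains G B})"
  unfolding ex_def by (rule arg_cong[where f = Max]) blast

lemma finite_free_graphs_on:
  "finite {G :: nat sgraph. verts G = {0..<n} \<and> sgraph_wf G \<and> \<not> contains G B}"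
proof (rule finite_subset)
  show "{G :: nat sgraph. verts G = {0..<n} \<and> sgraph_wf G \<and> \<not> contains G B}
          \<subseteq> {{0..<n}} \<times> Pow (Pow {0..<n})"
    using sgraph_wf_edge_subset by fastforce
qed simp

lemma card_copies_le_ex:
  fixes G :: "nat sgraph"
  assumes "verts G = {0..<n}" "sgraph_wf G" "\<not> contains G B"
  shows "card (copies A G) \<le> ex n A B"
proof -
  have "G \<in> {G :: nat sgraph. verts G = {0..<n} \<and> sgraph_wf G \<and> \<not> contains G B}"
    using assms by simp
  then show ?thesis
    unfolding ex_eq_Max by (intro Max_ge finite_imageI finite_free_graphs_on imageI)
qed

lemma ex_attained:
  fixes G :: "nat sgraph"
  assumes "verts G = {0..<n}" "sgraph_wf G" "\<not> contains G B"
  obtains G0 :: "nat sgraph"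
  where "verts G0 = {0..<n}" "sgraph_wf G0" "\<not> contains G0 B" "ex n A B = card (copies A G0)"
proof -
  have "G \<in> {G :: nat sgraph. verts G = {0..<n} \<and> sgraph_wf G \<and> \<not> contains G B}"
    using assms by simp
  then have "ex n A B \<in> (\<lambda>G. card (copies A G)) `
               {G :: nat sgraph. verts G = {0..<n} \<and> sgraph_wf G \<and> \<not> contains G B}"
    unfolding ex_eq_Max by (intro Max_in finite_imageI finite_free_graphs_on) blast
  then show ?thesis
    using that by blast
qed

lemma extremal_graph_with_many_copies:
  fixes XX :: "'a sgraph set" and FF :: "'b sgraph set"
  assumes wX: "sgraph_wf X" and X: "X \<in> XX" and ne: "verts X \<noteq> {}"
    and chi: "\<forall>F'\<in>FF. chi X < chi F'"
  obtains G0 :: "nat sgraph"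
  where "verts G0 = {0..<m}" "sgraph_wf G0" "\<not> contains G0 FF" "ex m XX FF = card (copies XX G0)"
    and "(m div card (verts X)) ^ card (verts X) \<le> ex m XX FF"
proof -
  obtain G1 :: "nat sgraph" where G1: "verts G1 = {0..<m}" "sgraph_wf G1" "\<not> contains G1 FF"
    "(m div card (verts X)) ^ card (verts X) \<le> card (copies {X} G1)"
    using exists_free_graph_with_many_copies[OF wX ne chi, of "m div card (verts X)" m] by auto
  have "card (copies {X} G1) \<le> card (copies XX G1)"
    using X by (intro card_mono finite_copies[OF G1(2)]) (auto simp: copies_def)
  then have "(m div card (verts X)) ^ card (verts X) \<le> ex m XX FF"
    using G1(4) card_copies_le_ex[OF G1(1-3), of XX] by linarith
  moreover obtain G0 :: "nat sgraph" where "verts G0 = {0..<m}" "sgraph_wf G0" "\<not> contains G0 FF"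
    "ex m XX FF = card (copies XX G0)"
    using ex_attained[OF G1(1-3)] by blast
  ultimately show thesis
    using that by blast
qed

lemma ex_eventually_increasing:
  fixes XX :: "'a sgraph set" and FF :: "'b sgraph set" and X :: "'a sgraph"
  assumes wXX: "\<forall>Y\<in>XX. sgraph_wf Y" and X: "X \<in> XX" and ne: "verts X \<noteq> {}"
    and chi: "\<forall>F'\<in>FF. chi X < chi F'" and small: "\<forall>F'\<in>FF. card (verts F') \<le> f"
    and sparse: "\<And>m G. verts G = {0..<m} \<Longrightarrow> sgraph_wf G \<Longrightarrow> 1 \<le> m \<Longrightarrow>
                   \<not> extendable XX f G \<Longrightarrow> card (copies XX G) \<le> C * m ^ (card (verts X) - 1)"
  shows "\<exists>N. \<forall>n\<ge>N. ex (n - 1) XX FF < ex n XX FF"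
proof -
  define d where "d = card (verts X)"
  have wX: "sgraph_wf X"
    using X wXX by blast
  have d: "1 \<le> d"
    using ne sgraph_wf_finite_verts[OF wX] unfolding d_def by (simp add: Suc_le_eq card_gt_0_iff)
  obtain M where M: "\<forall>m\<ge>M. C * m ^ (d - 1) < (m div d) ^ d"
    using power_div_eventually_gt[OF d] by blast
  have "ex (n - 1) XX FF < ex n XX FF" if n: "M + 2 \<le> n" for n
  proof -
    define m where "m = n - 1"
    have n_eq: "n = Suc m" and m: "1 \<le> m" "M \<le> m"
      using n unfolding m_def by auto
    obtain G0 :: "nat sgraph" where G0: "verts G0 = {0..<m}" "sgraph_wf G0" "\<not> contains G0 FF"
      "ex m XX FF = card (copies XX G0)" and lower: "(m div d) ^ d \<le> ex m XX FF"
      using extremal_graph_with_many_copies[OF wX X ne chi] unfolding d_def by blast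
    show ?thesis
    proof (cases "extendable XX f G0")
      case True
      then obtain G' where G': "verts G' = {0..<Suc m}" "sgraph_wf G'" "\<not> contains G' FF"
        "card (copies XX G0) < card (copies XX G')"
        using extendable_imp_larger_extension[OF G0(1-3) small wXX] by blast
      then show ?thesis
        using G0(4) card_copies_le_ex[OF G'(1-3), of XX] n_eq by simp
    next
      case False
      have "ex m XX FF \<le> C * m ^ (d - 1)"
        using sparse[OF G0(1,2) m(1) False] G0(4) unfolding d_def by simp
      also have "\<dots> < (m div d) ^ d"
        using M m(2) by blast
      finally show ?thesis
        using lower by simp
    qed
  qed
  then show ?thesis
    by blast
qed

section \<open>Copies in graphs that cannot be extended\<close>

lemma card_embeddings_le_if_not_extendable:
  assumes wY: "sgraph_wf Y" and wG: "sgraph_wf G" and Y: "Y \<in> XX" and b: "b \<in> verts Y"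
    and sparse: "\<not> extendable XX f G"
  shows "card (embeddings Y G) \<le> f * card (verts G) ^ (card (verts Y) - 1)"
  using sparse Y b unfolding extendable_def
  by (intro card_embeddings_le_delete_vertex[OF wY wG b]) (auto simp: not_le)

lemma card_copies_single_le_if_not_extendable:
  assumes wH: "sgraph_wf H" and wG: "sgraph_wf G" and ne: "verts H \<noteq> {}"
    and sparse: "\<not> extendable {H} f G"
  shows "card (copies {H} G) \<le> f * card (verts G) ^ (card (verts H) - 1)"
proof -
  obtain b where "b \<in> verts H"
    using ne by blast
  then show ?thesis
    using card_copies_le_card_embeddings[OF wH wG]
      card_embeddings_le_if_not_extendable[OF wH wG _ _ sparse] by fastforce
qed

lemma finite_Hfam: "finite (verts H) \<Longrightarrow> finite (Hfam H)"
  unfolding Hfam_def indep_def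
  by (rule finite_subset[of _ "(\<lambda>I. delete_set H I) ` Pow (verts H)"]) auto

lemma sgraph_wf_Hfam: "sgraph_wf H \<Longrightarrow> X \<in> Hfam H \<Longrightarrow> sgraph_wf X"
  unfolding Hfam_def using sgraph_wf_delete_set by blast

lemma card_verts_Hfam_le: "finite (verts H) \<Longrightarrow> X \<in> Hfam H \<Longrightarrow> card (verts X) \<le> card (verts H)"
  unfolding Hfam_def by (auto intro: card_mono)

lemma card_embeddings_Hfam_le_delete:
  assumes wH: "sgraph_wf H" and wG: "sgraph_wf G" and f: "1 \<le> f"
    and sparse: "\<not> extendable (Hfam H) f G"
    and I: "indep H I" "delete_set H I \<in> Hfam H" and J: "indep H J"
  shows "card (embeddings (delete_set H I) G)
           \<le> f ^ card (verts H) * card (embeddings (delete_set H (I \<union> J)) G)"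
proof -
  have T: "indep (delete_set H I) (J - I)"
    using J unfolding indep_def by auto
  have "card (embeddings (delete_set H I) G)
          \<le> f ^ card (J - I) * card (embeddings (delete_set (delete_set H I) (J - I)) G)"
    using sparse I(2) T unfolding extendable_def indep_def
    by (intro card_embeddings_le_delete_indep[OF sgraph_wf_delete_set[OF wH] wG T]) (auto simp: not_le)
  also have "delete_set (delete_set H I) (J - I) = delete_set H (I \<union> J)"
    unfolding delete_set_delete_set by (simp add: Un_Diff_cancel)
  also have "f ^ card (J - I) \<le> f ^ card (verts H)"
    using J sgraph_wf_finite_verts[OF wH] f unfolding indep_def
    by (intro power_increasing card_mono) auto
  finally show ?thesis
    by simp
qed

lemma card_embeddings_delete_union_le:
  fixes H :: "'a sgraph" and G :: "nat sgraph"
  assumes wH: "sgraph_wf H" and I0: "indep H I0" "I0 \<noteq> verts H"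
    and VG: "verts G = {0..<m}" and wG: "sgraph_wf G" and m: "1 \<le> m" and f: "1 \<le> f"
    and sparse: "\<not> extendable (Hfam H) f G" and I: "indep H I"
  shows "card (embeddings (delete_set H (I \<union> I0)) G) \<le> f * m ^ (card (verts H - I0) - 1)"
proof (cases "I \<subseteq> I0")
  case True
  have eq: "delete_set H (I \<union> I0) = delete_set H I0"
    using True by (simp add: Un_absorb1)
  have mem: "delete_set H I0 \<in> Hfam H"
    using I0 unfolding Hfam_def by blast
  obtain b where b: "b \<in> verts (delete_set H I0)"
    using I0 unfolding indep_def by auto
  show ?thesis
    using card_embeddings_le_if_not_extendable[OF sgraph_wf_delete_set[OF wH] wG mem b sparse]
    unfolding eq VG by simp
next
  case False
  define d where "d = card (verts H - I0)"
  have finH: "finite (verts H)"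
    using sgraph_wf_finite_verts[OF wH] .
  have "verts H - (I \<union> I0) \<subset> verts H - I0"
    using False I unfolding indep_def by blast
  then have card_less: "card (verts H - (I \<union> I0)) \<le> d - 1"
    unfolding d_def using finH psubset_card_mono[of "verts H - I0" "verts H - (I \<union> I0)"] by simp
  have "card (embeddings (delete_set H (I \<union> I0)) G) \<le> m ^ card (verts H - (I \<union> I0))"
    using card_embeddings_le_power[of "delete_set H (I \<union> I0)" G] finH VG by simp
  also have "\<dots> \<le> m ^ (d - 1)"
    using m card_less by (rule power_increasing[rotated])
  also have "\<dots> \<le> f * m ^ (d - 1)"
    using f by simp
  finally show ?thesis
    unfolding d_def .
qed

text \<open>Embeddings of \<open>H - I\<close> are counted by first deleting \<open>I0 - I\<close>: what is left is \<open>H - I0\<close>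
  if I is contained in I0, and has fewer vertices otherwise.\<close>
lemma card_embeddings_Hfam_le:
  fixes H :: "'a sgraph" and G :: "nat sgraph"
  assumes wH: "sgraph_wf H" and I0: "indep H I0" "I0 \<noteq> verts H"
    and VG: "verts G = {0..<m}" and wG: "sgraph_wf G" and m: "1 \<le> m" and f: "1 \<le> f"
    and sparse: "\<not> extendable (Hfam H) f G" and X: "X \<in> Hfam H"
  shows "card (embeddings X G) \<le> f ^ card (verts H) * (f * m ^ (card (verts H - I0) - 1))"
proof -
  obtain I where I: "indep H I" "X = delete_set H I"
    using X unfolding Hfam_def by blast
  have "card (embeddings X G) \<le> f ^ card (verts H) * card (embeddings (delete_set H (I \<union> I0)) G)"
    using card_embeddings_Hfam_le_delete[OF wH wG f sparse I(1) _ I0(1)] X I(2) by simp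
  also have "\<dots> \<le> f ^ card (verts H) * (f * m ^ (card (verts H - I0) - 1))"
    by (intro mult_le_mono2 card_embeddings_delete_union_le[OF wH I0 VG wG m f sparse I(1)])
  finally show ?thesis .
qed

lemma card_copies_Hfam_le_if_not_extendable:
  fixes H :: "'a sgraph" and G :: "nat sgraph"
  assumes wH: "sgraph_wf H" and I0: "indep H I0" "I0 \<noteq> verts H"
    and VG: "verts G = {0..<m}" and wG: "sgraph_wf G" and m: "1 \<le> m" and f: "1 \<le> f"
    and sparse: "\<not> extendable (Hfam H) f G"
  shows "card (copies (Hfam H) G)
           \<le> card (Hfam H) * (f ^ card (verts H) * f) * m ^ (card (verts H - I0) - 1)"
proof -
  have "card (copies (Hfam H) G) \<le> (\<Sum>X\<in>Hfam H. card (embeddings X G))"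
    using finite_Hfam[OF sgraph_wf_finite_verts[OF wH]] sgraph_wf_Hfam[OF wH]
    by (intro card_copies_le_sum_embeddings[OF _ _ wG]) auto
  also have "\<dots> \<le> (\<Sum>X\<in>Hfam H. f ^ card (verts H) * (f * m ^ (card (verts H - I0) - 1)))"
    by (intro sum_mono card_embeddings_Hfam_le[OF wH I0 VG wG m f sparse])
  finally show ?thesis
    by (simp add: mult.assoc)
qed

lemma chi_fam_less_imp_bex:
  assumes "chi_fam A < chi_fam B"
  shows "\<exists>X\<in>A. \<forall>Y\<in>B. chi X < chi Y"
proof -
  have "A \<noteq> {}"
    using assms unfolding chi_fam_def by auto
  then obtain X where X: "X \<in> A" "chi_fam A = enat (chi X)"
    using wellorder_InfI[of _ "(\<lambda>G. enat (chi G)) ` A"] unfolding chi_fam_def by blast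
  have "chi X < chi Y" if "Y \<in> B" for Y
  proof -
    have "enat (chi X) < chi_fam B"
      using assms X(2) by simp
    also have "chi_fam B \<le> enat (chi Y)"
      unfolding chi_fam_def using that by (rule INF_lower)
    finally show ?thesis
      by simp
  qed
  then show ?thesis
    using X(1) by blast
qed

lemma Hstar_subset_Hfam: "Hstar X \<subseteq> Hfam X"
  unfolding Hstar_def Hfam_def by blast

lemma chi_fam_antimono: "A \<subseteq> B \<Longrightarrow> chi_fam B \<le> chi_fam A"
  unfolding chi_fam_def by (rule INF_superset_mono) simp_all

lemma ex_single_eventually_increasing:
  fixes H :: "'a sgraph" and F :: "'b sgraph"
  assumes H: "graph H" and chi: "chi H < chi F"
  shows "\<exists>N. \<forall>n\<ge>N. ex (n - 1) {H} {F} < ex n {H} {F}"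
proof (rule ex_eventually_increasing[where X = H and f = "card (verts F)" and C = "card (verts F)"])
  show "\<forall>Y\<in>{H}. sgraph_wf Y" "verts H \<noteq> {}"
    using H unfolding graph_def by auto
  fix m and G :: "nat sgraph"
  assume "verts G = {0..<m}" "sgraph_wf G" "\<not> extendable {H} (card (verts F)) G"
  then show "card (copies {H} G) \<le> card (verts F) * m ^ (card (verts H) - 1)"
    using card_copies_single_le_if_not_extendable[of H G] H unfolding graph_def by simp
qed (use chi in auto)

lemma ex_Hfam_eventually_increasing:
  fixes H :: "'a sgraph" and F :: "'b sgraph"
  assumes H: "graph H" and F: "graph F" and chi: "chi_fam (Hfam H) < chi_fam (Hfam F)"
  shows "\<exists>N. \<forall>n\<ge>N. ex (n - 1) (Hfam H) (Hfam F) < ex n (Hfam H) (Hfam F)"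
proof -
  have wH: "sgraph_wf H" and wF: "sgraph_wf F" and neF: "verts F \<noteq> {}"
    using H F unfolding graph_def by auto
  have finF: "finite (verts F)"
    using sgraph_wf_finite_verts[OF wF] .
  obtain I0 where I0: "indep H I0" "I0 \<noteq> verts H"
    and chi0: "\<forall>F'\<in>Hfam F. chi (delete_set H I0) < chi F'"
    using chi_fam_less_imp_bex[OF chi] unfolding Hfam_def by blast
  have f: "1 \<le> card (verts F)"
    using finF neF by (simp add: Suc_le_eq card_gt_0_iff)
  show ?thesis
  proof (rule ex_eventually_increasing[where X = "delete_set H I0" and f = "card (verts F)"
        and C = "card (Hfam H) * (card (verts F) ^ card (verts H) * card (verts F))"])
    show "\<forall>Y\<in>Hfam H. sgraph_wf Y"
      using sgraph_wf_Hfam[OF wH] by blast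
    show "delete_set H I0 \<in> Hfam H"
      using I0 unfolding Hfam_def by blast
    show "verts (delete_set H I0) \<noteq> {}"
      using I0 unfolding indep_def by auto
    show "\<forall>F'\<in>Hfam F. card (verts F') \<le> card (verts F)"
      using card_verts_Hfam_le[OF finF] by blast
    fix m and G :: "nat sgraph"
    assume "verts G = {0..<m}" "sgraph_wf G" "1 \<le> m" "\<not> extendable (Hfam H) (card (verts F)) G"
    then show "card (copies (Hfam H) G) \<le> card (Hfam H) * (card (verts F) ^ card (verts H) *
                 card (verts F)) * m ^ (card (verts (delete_set H I0)) - 1)"
      using card_copies_Hfam_le_if_not_extendable[OF wH I0 _ _ _ f] by simp
  qed (rule chi0)
qed

theorem proposition9:
  fixes H :: "'a sgraph" and F :: "'b sgraph"
  assumes "graph H" and "graph F"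
  shows "(chi H < chi F \<longrightarrow>
            (\<exists>N. \<forall>n\<ge>N. ex n {H} {F} > ex (n - 1) {H} {F}))
       \<and> (chi_fam (Hstar H) < chi_fam (Hfam F) \<longrightarrow>
            (\<exists>N. \<forall>n\<ge>N. ex n (Hfam H) (Hfam F) > ex (n - 1) (Hfam H) (Hfam F)))"
proof (intro conjI impI)
  show "\<exists>N. \<forall>n\<ge>N. ex n {H} {F} > ex (n - 1) {H} {F}" if "chi H < chi F"
    using ex_single_eventually_increasing[OF assms(1) that] by simp
  assume "chi_fam (Hstar H) < chi_fam (Hfam F)"
  then have "chi_fam (Hfam H) < chi_fam (Hfam F)"
    using chi_fam_antimono[OF Hstar_subset_Hfam] by (rule le_less_trans[rotated])
  then show "\<exists>N. \<forall>n\<ge>N. ex n (Hfam H) (Hfam F) > ex (n - 1) (Hfam H) (Hfam F)"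
    using ex_Hfam_eventually_increasing[OF assms] by simp
qed

end
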